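(* Let $\rho$ be a two-qubit state on $\mathbb{C}^2\otimes\mathbb{C}^2$ whose correlation matrix $T$ is diagonal, and write $\lambda_i=T_{ii}$ for $i=0,1,2$. Then $$d_{\max}(\rho)=\frac{1}{\sqrt2}\sqrt{\sum_{i=0}^{2}\lambda_i^2(1-n_i^2)},$$ where $\vec n=(n_0,n_1,n_2)^T$ is the unit vector defined as follows: if $\rho_B\neq I/2$, then $\vec n=\vec r^B/\|\vec r^B\|$; if $\rho_B=I/2$, then $n_i=1$ (and $n_j=0$ for $j\neq i$) for an index $i$ with $|\lambda_i|=\min_k|\lambda_k|$.
   Context: Let $\sigma_0,\sigma_1,\sigma_2$ be the Pauli matrices $X,Y,Z$. Every two-qubit state can be written as $\rho=\frac14\big(I\otimes I+\sum_i r^A_i\sigma_i\otimes I+\sum_j r^B_j I\otimes\sigma_j+\sum_{i,j}T_{ij}\sigma_i\otimes\sigma_j\big)$, with Bloch vectors $r^A_i=\mathrm{Tr}(\sigma_i\rho_A)$, $r^B_j=\mathrm{Tr}(\sigma_j\rho_B)$ (where $\rho_A=\mathrm{Tr}_B\rho$, $\rho_B=\mathrm{Tr}_A\rho$) and real correlation matrix $T_{ij}=\mathrm{Tr}((\sigma_i\otimes\sigma_j)\rho)$. A unitary $U^B$ on $\mathbb{C}^2$ is called cyclic for $\rho$ if $[\rho_B,U^B]=0$. Set $\rho_f=(I\otimes U^B)\rho(I\otimes U^{B\dagger})$, define the Fu distance $d(\rho,U^B)=\frac{1}{\sqrt2}\|\rho-\rho_f\|_F$ (Frobenius norm), and $d_{\max}(\rho)=\max\{d(\rho,U^B):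 U^B\text{ unitary},\ [\rho_B,U^B]=0\}$. *)

theory Defs
  imports "HOL-Analysis.Analysis"
begin

text \<open>Qubit operators: complex 2x2 matrices indexed by the numeral type 2.
  Two-qubit operators: complex matrices indexed by 2 x 2 (first component = qubit A).\<close>

type_synonym qop = "complex^2^2"
type_synonym qqop = "complex^(2\<times>2)^(2\<times>2)"

definition adj :: "complex^'n^'n \<Rightarrow> complex^'n^'n" where
  "adj M = (\<chi> i j. cnj (M $ j $ i))"

definition unitary_mat :: "complex^'n^'n \<Rightarrow> bool" where
  "unitary_mat U \<longleftrightarrow> U ** adj U = mat 1 \<and> adj U ** U = mat 1"

definition trace_mat :: "complex^'n^'n \<Rightarrow> complex" where
  "trace_mat M = (\<Sum>i\<in>UNIV. M $ i $ i)"

definition kron :: "qop \<Rightarrow> qop \<Rightarrow> qqop" where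
  "kron A B = (\<chi> p q. A $ fst p $ fst q * B $ snd p $ snd q)"

definition density :: "complex^'n^'n \<Rightarrow> bool" where
  "density \<rho> \<longleftrightarrow> adj \<rho> = \<rho>
     \<and> (\<forall>v::complex^'n. 0 \<le> Re (\<Sum>i\<in>UNIV. \<Sum>j\<in>UNIV. cnj (v $ i) * \<rho> $ i $ j * v $ j))
     \<and> trace_mat \<rho> = 1"

definition pauliX :: qop where
  "pauliX = (\<chi> a b. if a \<noteq> b then 1 else 0)"
definition pauliY :: qop where
  "pauliY = (\<chi> a b. if a = 0 \<and> b = 1 then - \<i> else if a = 1 \<and> b = 0 then \<i> else 0)"
definition pauliZ :: qop where
  "pauliZ = (\<chi> a b. if a = b then (if a = 0 then 1 else -1) else 0)"

definition pauli :: "3 \<Rightarrow> qop" where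
  "pauli i = (if i = 0 then pauliX else if i = 1 then pauliY else pauliZ)"

definition ptrace_A :: "qqop \<Rightarrow> qop" where
  "ptrace_A \<rho> = (\<chi> j l. \<Sum>i\<in>UNIV. \<rho> $ (i, j) $ (i, l))"

definition blochB :: "qqop \<Rightarrow> real^3" where
  "blochB \<rho> = (\<chi> j. Re (trace_mat (pauli j ** ptrace_A \<rho>)))"

definition corr :: "qqop \<Rightarrow> 3 \<Rightarrow> 3 \<Rightarrow> real" where
  "corr \<rho> i j = Re (trace_mat (kron (pauli i) (pauli j) ** \<rho>))"

definition frob :: "complex^'n^'n \<Rightarrow> real" where
  "frob M = sqrt (\<Sum>i\<in>UNIV. \<Sum>j\<in>UNIV. (cmod (M $ i $ j))\<^sup>2)"

definition cyclic :: "qqop \<Rightarrow> qop \<Rightarrow> bool" where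
  "cyclic \<rho> U \<longleftrightarrow> unitary_mat U \<and> ptrace_A \<rho> ** U = U ** ptrace_A \<rho>"

definition rho_f :: "qqop \<Rightarrow> qop \<Rightarrow> qqop" where
  "rho_f \<rho> U = kron (mat 1) U ** \<rho> ** kron (mat 1) (adj U)"

definition fu_dist :: "qqop \<Rightarrow> qop \<Rightarrow> real" where
  "fu_dist \<rho> U = frob (\<rho> - rho_f \<rho> U) / sqrt 2"

definition fu_dists :: "qqop \<Rightarrow> real set" where
  "fu_dists \<rho> = {fu_dist \<rho> U | U. cyclic \<rho> U}"

definition is_dmax :: "qqop \<Rightarrow> real \<Rightarrow> bool" where
  "is_dmax \<rho> d \<longleftrightarrow> d \<in> fu_dists \<rho> \<and> (\<forall>x\<in>fu_dists \<rho>. x \<le> d)"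

end

theory Submission
  imports Defs
begin

(* Write rho_B = (I + r.sigma)/2 and expand a qubit unitary as U = alpha I + beta.sigma.
   A Parseval identity in the Pauli basis of qubit A splits the squared Frobenius norm of
   rho - rho_f into the reduced part Tr_A (rho - rho_f), which vanishes because U commutes
   with rho_B, and the parts Tr_A ((sigma_k x I) (rho - rho_f)).  As T is diagonal, the k-th
   part equals lambda_k/2 (sigma_k - U sigma_k U^dagger), whose squared norm is
   2 lambda_k^2 sum_{j <> k} |beta_j|^2; unitarity gives sum_j |beta_j|^2 <= 1.
   If r <> 0, commuting with rho_B forces beta to be parallel to n = r/|r|, which bounds each
   weight sum_{j <> k} |beta_j|^2 by 1 - n_k^2.  If rho_B = I/2, beta is unconstrained and the
   weighted sum is largest when all weight sits on the axis of smallest |lambda_k|.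
   In both cases U = n.sigma attains the bound. *)

lemma num2_cases: fixes x :: 2 shows "x = 0 \<or> x = 1"
  using exhaust_2[of x] by auto

lemma num3_cases: fixes x :: 3 shows "x = 0 \<or> x = 1 \<or> x = 2"
  using exhaust_3[of x] by auto

lemma UNIV_2_eq: "(UNIV::2 set) = {0, 1}"
  using num2_cases by auto

lemma UNIV_3_eq: "(UNIV::3 set) = {0, 1, 2}"
  using num3_cases by auto

lemma sum_UNIV_2: "sum f (UNIV::2 set) = f 0 + f 1"
  by (simp add: UNIV_2_eq)

lemma sum_UNIV_3: "sum f (UNIV::3 set) = f 0 + f 1 + f 2"
  unfolding UNIV_3_eq by (simp add: ac_simps)

lemma sum_UNIV_prod:
  "sum f (UNIV::('a::finite \<times> 'b::finite) set) = (\<Sum>a\<in>UNIV. \<Sum>b\<in>UNIV. f (a, b))"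
  by (simp add: sum.cartesian_product flip: UNIV_Times_UNIV)

lemma qop_eq_iff:
  "(M::qop) = N \<longleftrightarrow> M$0$0 = N$0$0 \<and> M$0$1 = N$0$1 \<and> M$1$0 = N$1$0 \<and> M$1$1 = N$1$1"
  by (metis (full_types) num2_cases vec_eq_iff)

lemma matrix_mult_2_entry: "((A::qop) ** B) $ i $ j = A$i$0 * B$0$j + A$i$1 * B$1$j"
  by (simp add: matrix_matrix_mult_def sum_UNIV_2)

lemma matrix_add_rdistrib: "(A + B) ** C = A ** C + B ** C"
  by (vector matrix_matrix_mult_def sum.distrib[symmetric] field_simps)

lemma matrix_diff_ldistrib: "(A::'a::ring_1^'n^'m) ** (B - C) = A ** B - A ** C"
  by (vector matrix_matrix_mult_def sum_subtractf[symmetric] field_simps)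

lemma matrix_diff_rdistrib: "((A::'a::ring_1^'n^'m) - B) ** C = A ** C - B ** C"
  by (vector matrix_matrix_mult_def sum_subtractf[symmetric] field_simps)

lemma adj_adj [simp]: "adj (adj M) = M"
  by (simp add: vec_eq_iff adj_def)

lemma adj_matrix_mult: "adj (A ** B) = adj B ** adj A"
  by (simp add: vec_eq_iff adj_def matrix_matrix_mult_def mult.commute)

lemma hermitian_entry:
  assumes "adj M = M"
  shows "cnj (M $ i $ j) = M $ j $ i"
proof -
  have "adj M $ j $ i = M $ j $ i"
    using assms by simp
  then show ?thesis
    by (simp add: adj_def)
qed

definition frob_sq :: "complex^'n^'n \<Rightarrow> real" where
  "frob_sq M = (\<Sum>i\<in>UNIV. \<Sum>j\<in>UNIV. (cmod (M $ i $ j))\<^sup>2)"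

lemma frob_sq_eq_trace: "frob_sq M = Re (trace_mat (M ** adj M))"
  by (simp add: frob_sq_def trace_mat_def matrix_matrix_mult_def adj_def
      complex_mult_cnj cmod_power2)

lemma frob_sq_mult_unitary:
  assumes "W ** adj W = mat 1"
  shows "frob_sq (M ** W) = frob_sq M"
proof -
  have "(M ** W) ** adj (M ** W) = M ** (W ** adj W) ** adj M"
    by (simp add: adj_matrix_mult matrix_mul_assoc)
  then show ?thesis by (simp add: frob_sq_eq_trace assms)
qed

lemma frob_sq_unitary: "unitary_mat U \<Longrightarrow> frob_sq U = CARD('n)"
  for U :: "complex^'n^'n"
  by (simp add: frob_sq_eq_trace unitary_mat_def trace_mat_def mat_def)

lemma frob_sq_zero [simp]: "frob_sq 0 = 0"
  by (simp add: frob_sq_def)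

lemma frob_sq_scaleR: "frob_sq (c *\<^sub>R M) = c\<^sup>2 * frob_sq M"
  by (simp add: frob_sq_def power_mult_distrib sum_distrib_left)

lemma frob_sq_conj_diff:
  assumes "unitary_mat U"
  shows "frob_sq (M - U ** M ** adj U) = frob_sq (M ** U - U ** M)"
proof -
  have "M - U ** M ** adj U = (M ** U - U ** M) ** adj U"
    using assms by (simp add: unitary_mat_def matrix_diff_rdistrib flip: matrix_mul_assoc)
  moreover have "adj U ** adj (adj U) = mat 1"
    using assms by (simp add: unitary_mat_def)
  ultimately show ?thesis by (simp add: frob_sq_mult_unitary)
qed

definition slice_A :: "qqop \<Rightarrow> 2 \<Rightarrow> 2 \<Rightarrow> qop" where
  "slice_A Y b b' = (\<chi> a a'. Y $ (a, b) $ (a', b'))"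

lemma frob_sq_slices: "frob_sq Y = (\<Sum>b\<in>UNIV. \<Sum>b'\<in>UNIV. frob_sq (slice_A Y b b'))"
  by (simp add: frob_sq_def slice_A_def sum_UNIV_prod sum_UNIV_2 algebra_simps)

lemma ptrace_A_entry_slice: "ptrace_A Y $ b $ b' = trace_mat (slice_A Y b b')"
  by (simp add: ptrace_A_def trace_mat_def slice_A_def)

lemma ptrace_A_kron_entry_slice:
  "ptrace_A (kron A (mat 1) ** Y) $ b $ b' = trace_mat (A ** slice_A Y b b')"
  using num2_cases[of b]
  by (auto simp: ptrace_A_def trace_mat_def slice_A_def kron_def matrix_matrix_mult_def
      sum_UNIV_prod sum_UNIV_2 mat_def algebra_simps)

lemma ptrace_A_diff: "ptrace_A (X - Y) = ptrace_A X - ptrace_A Y"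
  by (simp add: vec_eq_iff ptrace_A_def sum_subtractf)

lemma kron_mult: "kron A B ** kron C D = kron (A ** C) (B ** D)"
  by (simp add: vec_eq_iff split_paired_All kron_def matrix_matrix_mult_def sum_UNIV_prod
      sum_product ac_simps)

lemma kron_id_id: "kron (mat 1) (mat 1) = mat 1"
  by (simp add: vec_eq_iff split_paired_All kron_def mat_def prod_eq_iff)

lemma ptrace_A_kron_id_left: "ptrace_A (kron (mat 1) U ** X) = U ** ptrace_A X"
  by (simp add: vec_eq_iff ptrace_A_def kron_def matrix_matrix_mult_def sum_UNIV_prod
      sum_UNIV_2 mat_def algebra_simps)

lemma ptrace_A_kron_id_right: "ptrace_A (X ** kron (mat 1) V) = ptrace_A X ** V"
  by (simp add: vec_eq_iff ptrace_A_def kron_def matrix_matrix_mult_def sum_UNIV_prod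
      sum_UNIV_2 mat_def algebra_simps)

lemma trace_kron_id_left: "trace_mat (kron (mat 1) B ** X) = trace_mat (B ** ptrace_A X)"
  by (simp add: trace_mat_def ptrace_A_def kron_def matrix_matrix_mult_def sum_UNIV_prod
      sum_UNIV_2 mat_def algebra_simps)

lemma trace_kron_eq_trace_ptrace_A:
  "trace_mat (kron A B ** \<rho>) = trace_mat (B ** ptrace_A (kron A (mat 1) ** \<rho>))"
proof -
  have "kron A B = kron (mat 1) B ** kron A (mat 1)"
    by (simp add: kron_mult)
  then show ?thesis
    by (simp add: trace_kron_id_left flip: matrix_mul_assoc)
qed

lemma ptrace_A_kron_rho_f:
  "ptrace_A (kron A (mat 1) ** rho_f \<rho> U) = U ** ptrace_A (kron A (mat 1) ** \<rho>) ** adj U"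
proof -
  have "kron A (mat 1) ** kron (mat 1) U = kron (mat 1) U ** kron A (mat 1)"
    by (simp add: kron_mult)
  then have "kron A (mat 1) ** rho_f \<rho> U
      = kron (mat 1) U ** (kron A (mat 1) ** \<rho>) ** kron (mat 1) (adj U)"
    by (simp add: rho_f_def matrix_mul_assoc)
  then show ?thesis
    by (simp add: ptrace_A_kron_id_left ptrace_A_kron_id_right)
qed

lemma adj_ptrace_A_kron:
  assumes "adj A = A" "adj \<rho> = \<rho>"
  shows "adj (ptrace_A (kron A (mat 1) ** \<rho>)) = ptrace_A (kron A (mat 1) ** \<rho>)"
  by (simp add: qop_eq_iff adj_def ptrace_A_def kron_def matrix_matrix_mult_def sum_UNIV_prod
      sum_UNIV_2 mat_def hermitian_entry[OF assms(1)] hermitian_entry[OF assms(2)] algebra_simps)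

lemma adj_mat_1: "adj (mat 1) = mat 1"
  by (simp add: vec_eq_iff adj_def mat_def)

lemma adj_pauli: "adj (pauli k) = pauli k"
  by (simp add: qop_eq_iff adj_def pauli_def pauliX_def pauliY_def pauliZ_def)

lemma frob_sq_pauli_parseval:
  "frob_sq (M::qop) = ((cmod (trace_mat M))\<^sup>2 + (\<Sum>k\<in>UNIV. (cmod (trace_mat (pauli k ** M)))\<^sup>2)) / 2"
  by (simp only: frob_sq_def trace_mat_def sum_UNIV_2 sum_UNIV_3 matrix_mult_2_entry cmod_power2)
    (simp add: pauli_def pauliX_def pauliY_def pauliZ_def power2_eq_square field_simps)

lemma frob_sq_ptrace_A_parseval:
  "frob_sq Y = (frob_sq (ptrace_A Y) + (\<Sum>k\<in>UNIV. frob_sq (ptrace_A (kron (pauli k) (mat 1) ** Y)))) / 2"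
proof -
  have "frob_sq Y = (\<Sum>b\<in>UNIV. \<Sum>b'\<in>UNIV. ((cmod (ptrace_A Y $ b $ b'))\<^sup>2
      + (\<Sum>k\<in>UNIV. (cmod (ptrace_A (kron (pauli k) (mat 1) ** Y) $ b $ b'))\<^sup>2)) / 2)"
    by (simp only: ptrace_A_kron_entry_slice)
      (simp add: frob_sq_slices frob_sq_pauli_parseval ptrace_A_entry_slice)
  then show ?thesis
    by (simp add: frob_sq_def sum_UNIV_2 sum_UNIV_3 field_simps)
qed

lemma hermitian_pauli_expansion:
  assumes "adj M = M"
  shows "M = (Re (trace_mat M) / 2) *\<^sub>R mat 1
    + (\<Sum>k\<in>UNIV. (Re (trace_mat (pauli k ** M)) / 2) *\<^sub>R pauli k)"
proof -
  have "Im (M$0$0) = 0" "Im (M$1$1) = 0" "M$1$0 = cnj (M$0$1)"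
    using hermitian_entry[OF assms, of 0 0] hermitian_entry[OF assms, of 1 1]
      hermitian_entry[OF assms, of 0 1] by (auto simp: complex_eq_iff)
  then show ?thesis
    by (simp add: qop_eq_iff sum_component sum_UNIV_2 sum_UNIV_3 trace_mat_def matrix_mult_2_entry
        pauli_def pauliX_def pauliY_def pauliZ_def mat_def complex_eq_iff field_simps)
qed

definition pauli_vec :: "real^3 \<Rightarrow> qop" where
  "pauli_vec n = (\<Sum>k\<in>UNIV. n$k *\<^sub>R pauli k)"

lemma pauli_vec_entries:
  "pauli_vec n $0$0 = of_real (n$2)"
  "pauli_vec n $0$1 = of_real (n$0) - \<i> * of_real (n$1)"
  "pauli_vec n $1$0 = of_real (n$0) + \<i> * of_real (n$1)"
  "pauli_vec n $1$1 = - of_real (n$2)"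
  by (simp_all only: pauli_vec_def sum_UNIV_3 vector_add_component vector_scaleR_component)
    (simp_all add: pauli_def pauliX_def pauliY_def pauliZ_def scaleR_conv_of_real)

lemma pauli_vec_scaleR: "pauli_vec (c *\<^sub>R n) = c *\<^sub>R pauli_vec n"
  by (simp add: pauli_vec_def scaleR_sum_right)

lemma norm_eq_1_iff_sum_squares: "norm (x::real^'n) = 1 \<longleftrightarrow> (\<Sum>i\<in>UNIV. (x$i)\<^sup>2) = 1"
  by (simp add: norm_eq_1 inner_vec_def power2_eq_square)

lemma pauli_vec_unitary:
  assumes "norm n = 1"
  shows "unitary_mat (pauli_vec n)"
proof -
  have unit: "(n$0)\<^sup>2 + (n$1)\<^sup>2 + (n$2)\<^sup>2 = 1"
    using assms by (simp add: norm_eq_1_iff_sum_squares sum_UNIV_3)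
  have "adj (pauli_vec n) = pauli_vec n"
    by (simp add: qop_eq_iff adj_def pauli_vec_entries)
  moreover have "pauli_vec n ** pauli_vec n = mat 1"
    using unit by (simp add: qop_eq_iff matrix_mult_2_entry pauli_vec_entries mat_def
        complex_eq_iff power2_eq_square algebra_simps)
  ultimately show ?thesis
    by (simp add: unitary_mat_def)
qed

definition pauli_coeff :: "qop \<Rightarrow> 3 \<Rightarrow> complex" where
  "pauli_coeff U k = trace_mat (pauli k ** U) / 2"

lemma pauli_coeff_entries:
  "pauli_coeff U 0 = (U$0$1 + U$1$0) / 2"
  "pauli_coeff U 1 = \<i> * (U$0$1 - U$1$0) / 2"
  "pauli_coeff U 2 = (U$0$0 - U$1$1) / 2"
  by (simp_all add: pauli_coeff_def trace_mat_def sum_UNIV_2 matrix_mult_2_entry pauli_def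
      pauliX_def pauliY_def pauliZ_def algebra_simps)

lemma pauli_coeff_pauli_vec: "pauli_coeff (pauli_vec n) k = of_real (n$k)"
  using num3_cases[of k] by (auto simp: pauli_coeff_entries pauli_vec_entries)

lemma sum_pauli_coeff_unitary_le:
  assumes "unitary_mat U"
  shows "(\<Sum>k\<in>UNIV. (cmod (pauli_coeff U k))\<^sup>2) \<le> 1"
proof -
  have "(cmod (trace_mat U))\<^sup>2 + (\<Sum>k\<in>UNIV. (cmod (trace_mat (pauli k ** U)))\<^sup>2) = 4"
    using frob_sq_pauli_parseval[of U] frob_sq_unitary[OF assms] by simp
  then have "(\<Sum>k\<in>UNIV. (cmod (trace_mat (pauli k ** U)))\<^sup>2) \<le> 4"
    using zero_le_power2[of "cmod (trace_mat U)"] by linarith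
  then show ?thesis
    by (simp add: pauli_coeff_def norm_divide power_divide flip: sum_divide_distrib)
qed

definition transverse_weight :: "qop \<Rightarrow> 3 \<Rightarrow> real" where
  "transverse_weight U k = (\<Sum>j\<in>UNIV - {k}. (cmod (pauli_coeff U j))\<^sup>2)"

lemma transverse_weight_eq:
  "transverse_weight U k = (\<Sum>j\<in>UNIV. (cmod (pauli_coeff U j))\<^sup>2) - (cmod (pauli_coeff U k))\<^sup>2"
  by (simp add: transverse_weight_def sum_diff1)

lemma transverse_weight_pauli_vec:
  assumes "norm n = 1"
  shows "transverse_weight (pauli_vec n) k = 1 - (n$k)\<^sup>2"
  using assms by (simp add: transverse_weight_def pauli_coeff_pauli_vec sum_diff1
      norm_eq_1_iff_sum_squares)

lemma frob_sq_commutator_pauli: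
  "frob_sq (pauli k ** U - U ** pauli k) = 8 * transverse_weight U k"
  using num3_cases[of k]
  by (elim disjE; simp only: transverse_weight_eq frob_sq_def sum_UNIV_2 sum_UNIV_3
      vector_minus_component matrix_mult_2_entry pauli_coeff_entries cmod_power2)
    (simp_all add: pauli_def pauliX_def pauliY_def pauliZ_def power2_eq_square field_simps)

lemma pauli_coeff_parallel_if_commute:
  assumes "pauli_vec r ** U = U ** pauli_vec r"
  shows "pauli_coeff U i * of_real (r$j) = pauli_coeff U j * of_real (r$i)"
proof -
  have entry: "(pauli_vec r ** U) $ a $ b = (U ** pauli_vec r) $ a $ b" for a b
    using assms by simp
  let ?p = "of_real (r$0) - \<i> * of_real (r$1)" and ?q = "of_real (r$0) + \<i> * of_real (r$1)"
  have ii: "\<i> * \<i> = (-1::complex)"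
    by simp
  have e1: "?p * U$1$0 = U$0$1 * ?q"
    using entry[of 0 0] by (simp add: matrix_mult_2_entry pauli_vec_entries algebra_simps)
  have e2: "2 * U$0$1 * of_real (r$2) = ?p * (U$0$0 - U$1$1)"
    using entry[of 0 1] by (simp add: matrix_mult_2_entry pauli_vec_entries algebra_simps)
  have e3: "2 * U$1$0 * of_real (r$2) = ?q * (U$0$0 - U$1$1)"
    using entry[of 1 0] by (simp add: matrix_mult_2_entry pauli_vec_entries algebra_simps)
  have "pauli_coeff U 0 * of_real (r$1) = pauli_coeff U 1 * of_real (r$0)"
    using e1 ii unfolding pauli_coeff_entries by algebra
  moreover have "pauli_coeff U 0 * of_real (r$2) = pauli_coeff U 2 * of_real (r$0)"
    using e2 e3 ii unfolding pauli_coeff_entries by algebra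
  moreover have "pauli_coeff U 1 * of_real (r$2) = pauli_coeff U 2 * of_real (r$1)"
    using e2 e3 ii unfolding pauli_coeff_entries by algebra
  ultimately show ?thesis
    using num3_cases[of i] num3_cases[of j] by auto
qed

lemma ptrace_A_bloch:
  assumes "adj \<rho> = \<rho>" "trace_mat \<rho> = 1"
  shows "ptrace_A \<rho> = (1/2) *\<^sub>R (mat 1 + pauli_vec (blochB \<rho>))"
proof -
  have "adj (ptrace_A \<rho>) = ptrace_A \<rho>"
    using adj_ptrace_A_kron[of "mat 1" \<rho>] assms(1) by (simp add: adj_mat_1 kron_id_id)
  moreover have "trace_mat (ptrace_A \<rho>) = 1"
    using trace_kron_id_left[of "mat 1" \<rho>] assms(2) by (simp add: kron_id_id)
  ultimately show ?thesis
    by (subst hermitian_pauli_expansion) (simp_all add: blochB_def pauli_vec_def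
        scaleR_add_right scaleR_sum_right)
qed

lemma ptrace_A_kron_pauli_diagonal:
  assumes "adj \<rho> = \<rho>" and diag: "\<forall>i j. i \<noteq> j \<longrightarrow> corr \<rho> i j = 0"
  obtains a where
    "ptrace_A (kron (pauli k) (mat 1) ** \<rho>) = a *\<^sub>R mat 1 + (corr \<rho> k k / 2) *\<^sub>R pauli k"
proof -
  let ?H = "ptrace_A (kron (pauli k) (mat 1) ** \<rho>)"
  have "Re (trace_mat (pauli j ** ?H)) = corr \<rho> k j" for j
    by (simp add: corr_def trace_kron_eq_trace_ptrace_A)
  then have coeff: "(Re (trace_mat (pauli j ** ?H)) / 2) *\<^sub>R pauli j
      = (if k = j then (corr \<rho> k k / 2) *\<^sub>R pauli k else 0)" for j
    using diag by auto
  have "?H = (Re (trace_mat ?H) / 2) *\<^sub>R mat 1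
      + (\<Sum>j\<in>UNIV. (Re (trace_mat (pauli j ** ?H)) / 2) *\<^sub>R pauli j)"
    by (rule hermitian_pauli_expansion) (rule adj_ptrace_A_kron[OF adj_pauli assms(1)])
  also have "\<dots> = (Re (trace_mat ?H) / 2) *\<^sub>R mat 1 + (corr \<rho> k k / 2) *\<^sub>R pauli k"
    by (simp add: coeff)
  finally show ?thesis
    using that by blast
qed

lemma diff_conj_scaled_id_plus:
  assumes "unitary_mat U"
  shows "(a *\<^sub>R mat 1 + c *\<^sub>R P) - U ** (a *\<^sub>R mat 1 + c *\<^sub>R P) ** adj U
    = c *\<^sub>R (P - U ** P ** adj U)"
  using assms by (simp add: unitary_mat_def matrix_add_ldistrib matrix_add_rdistrib
      matrix_scalar_ac scaleR_right_diff_distrib flip: scalar_matrix_assoc)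

lemma frob_sq_diff_rho_f:
  assumes herm: "adj \<rho> = \<rho>" and diag: "\<forall>i j. i \<noteq> j \<longrightarrow> corr \<rho> i j = 0"
    and cyc: "cyclic \<rho> U"
  shows "frob_sq (\<rho> - rho_f \<rho> U) = (\<Sum>k\<in>UNIV. (corr \<rho> k k)\<^sup>2 * transverse_weight U k)"
proof -
  have U: "unitary_mat U" and comm: "ptrace_A \<rho> ** U = U ** ptrace_A \<rho>"
    using cyc by (auto simp: cyclic_def)
  have "ptrace_A (rho_f \<rho> U) = U ** ptrace_A \<rho> ** adj U"
    using ptrace_A_kron_rho_f[of "mat 1" \<rho> U] by (simp add: kron_id_id)
  also have "\<dots> = ptrace_A \<rho> ** (U ** adj U)"
    by (simp add: matrix_mul_assoc flip: comm)
  also have "\<dots> = ptrace_A \<rho>"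
    using U by (simp add: unitary_mat_def)
  finally have reduced: "ptrace_A (\<rho> - rho_f \<rho> U) = 0"
    by (simp add: ptrace_A_diff)
  have slice: "frob_sq (ptrace_A (kron (pauli k) (mat 1) ** (\<rho> - rho_f \<rho> U)))
      = 2 * ((corr \<rho> k k)\<^sup>2 * transverse_weight U k)" for k
  proof -
    obtain a where H: "ptrace_A (kron (pauli k) (mat 1) ** \<rho>)
        = a *\<^sub>R mat 1 + (corr \<rho> k k / 2) *\<^sub>R pauli k"
      using ptrace_A_kron_pauli_diagonal[OF herm diag] .
    have "ptrace_A (kron (pauli k) (mat 1) ** (\<rho> - rho_f \<rho> U))
        = (corr \<rho> k k / 2) *\<^sub>R (pauli k - U ** pauli k ** adj U)"
      by (simp add: matrix_diff_ldistrib ptrace_A_diff ptrace_A_kron_rho_f H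
          diff_conj_scaled_id_plus[OF U])
    then show ?thesis
      by (simp add: frob_sq_scaleR frob_sq_conj_diff[OF U] frob_sq_commutator_pauli
          power_divide)
  qed
  show ?thesis
    by (simp add: frob_sq_ptrace_A_parseval[of "\<rho> - rho_f \<rho> U"] reduced slice
        flip: sum_distrib_left)
qed

lemma transverse_sum_le_if_parallel:
  fixes \<beta> :: "'n::finite \<Rightarrow> complex" and n :: "real^'n"
  assumes unit: "norm n = 1"
    and parallel: "\<And>i j. \<beta> i * of_real (n$j) = \<beta> j * of_real (n$i)"
    and total: "(\<Sum>j\<in>UNIV. (cmod (\<beta> j))\<^sup>2) \<le> 1"
  shows "(\<Sum>j\<in>UNIV - {k}. (cmod (\<beta> j))\<^sup>2) \<le> 1 - (n$k)\<^sup>2"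
proof -
  define c where "c = (\<Sum>i\<in>UNIV. \<beta> i * of_real (n$i))"
  have unit': "(\<Sum>i\<in>UNIV. (n$i)\<^sup>2) = 1"
    using unit by (simp add: norm_eq_1_iff_sum_squares)
  have \<beta>: "\<beta> j = c * of_real (n$j)" for j
  proof -
    have "c * of_real (n$j) = (\<Sum>i\<in>UNIV. (\<beta> i * of_real (n$j)) * of_real (n$i))"
      by (simp add: c_def sum_distrib_left sum_distrib_right mult_ac)
    also have "\<dots> = (\<Sum>i\<in>UNIV. \<beta> j * of_real ((n$i)\<^sup>2))"
    proof (rule sum.cong[OF refl])
      fix i
      show "\<beta> i * of_real (n$j) * of_real (n$i) = \<beta> j * of_real ((n$i)\<^sup>2)"
        by (simp only: parallel[of i j]) (simp add: power2_eq_square mult.assoc)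
    qed
    also have "\<dots> = \<beta> j"
      by (simp only: of_real_sum[symmetric] sum_distrib_left[symmetric] unit') simp
    finally show ?thesis ..
  qed
  then have weights: "(cmod (\<beta> j))\<^sup>2 = (cmod c)\<^sup>2 * (n$j)\<^sup>2" for j
    by (simp add: norm_mult power_mult_distrib)
  have "(cmod c)\<^sup>2 \<le> 1"
    using total by (simp add: weights unit' flip: sum_distrib_left)
  moreover have "(n$k)\<^sup>2 \<le> 1"
    using member_le_sum[of k UNIV "\<lambda>i. (n$i)\<^sup>2"] unit' by simp
  ultimately show ?thesis
    by (simp add: weights sum_diff1 unit' mult_left_le_one_le flip: sum_distrib_left
        right_diff_distrib)
qed

lemma transverse_sum_le_axis:
  fixes \<mu> w :: "'n::finite \<Rightarrow> real"
  assumes "\<And>k. 0 \<le> w k" "sum w UNIV \<le> 1" "\<And>k. 0 \<le> \<mu> k" "\<And>k. \<mu> m \<le> \<mu> k"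
  shows "(\<Sum>k\<in>UNIV. \<mu> k * (\<Sum>j\<in>UNIV - {k}. w j)) \<le> (\<Sum>k\<in>UNIV. \<mu> k * (1 - (axis m 1 $ k)\<^sup>2))"
proof -
  have "\<mu> m * sum w UNIV \<le> (\<Sum>k\<in>UNIV. \<mu> k * w k)"
    unfolding sum_distrib_left by (intro sum_mono mult_right_mono) (use assms in auto)
  then have "(\<Sum>k\<in>UNIV. \<mu> k * (\<Sum>j\<in>UNIV - {k}. w j)) \<le> (sum \<mu> UNIV - \<mu> m) * sum w UNIV"
    by (simp add: sum_diff1 right_diff_distrib sum_subtractf left_diff_distrib
        flip: sum_distrib_right)
  also have "\<dots> \<le> sum \<mu> UNIV - \<mu> m"
    using assms member_le_sum[of m UNIV \<mu>]
    by (intro mult_right_le_one_le) (simp_all add: sum_nonneg)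
  also have "\<dots> = (\<Sum>k\<in>UNIV. \<mu> k - (if k = m then \<mu> k else 0))"
    by (simp add: sum_subtractf)
  also have "\<dots> = (\<Sum>k\<in>UNIV. \<mu> k * (1 - (axis m 1 $ k)\<^sup>2))"
    by (rule sum.cong) (simp_all add: axis_def)
  finally show ?thesis .
qed

lemma bloch_direction_optimal:
  assumes bloch: "ptrace_A \<rho> = (1/2) *\<^sub>R (mat 1 + pauli_vec r)"
    and "r \<noteq> 0" and n: "n = (1 / norm r) *\<^sub>R r"
  shows "norm n = 1" and "cyclic \<rho> (pauli_vec n)"
    and "\<And>U. cyclic \<rho> U \<Longrightarrow> transverse_weight U k \<le> 1 - (n$k)\<^sup>2"
proof -
  show unit: "norm n = 1"
    using \<open>r \<noteq> 0\<close> by (simp add: n)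
  have "r = norm r *\<^sub>R n"
    using \<open>r \<noteq> 0\<close> by (simp add: n)
  then have bloch_n: "ptrace_A \<rho> = (1/2) *\<^sub>R (mat 1 + norm r *\<^sub>R pauli_vec n)"
    using bloch by (metis pauli_vec_scaleR)
  show "cyclic \<rho> (pauli_vec n)"
    unfolding cyclic_def bloch_n using pauli_vec_unitary[OF unit]
    by (simp add: matrix_add_ldistrib matrix_add_rdistrib matrix_scalar_ac scaleR_add_right
        flip: scalar_matrix_assoc)
  fix U
  assume "cyclic \<rho> U"
  then have U: "unitary_mat U" and comm: "ptrace_A \<rho> ** U = U ** ptrace_A \<rho>"
    by (auto simp: cyclic_def)
  have "pauli_vec n ** U = U ** pauli_vec n"
    using comm \<open>r \<noteq> 0\<close>
    by (simp add: bloch_n matrix_add_ldistrib matrix_add_rdistrib matrix_scalar_ac scaleR_add_right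
        flip: scalar_matrix_assoc)
  then show "transverse_weight U k \<le> 1 - (n$k)\<^sup>2"
    unfolding transverse_weight_def
    by (intro transverse_sum_le_if_parallel unit pauli_coeff_parallel_if_commute
        sum_pauli_coeff_unitary_le U)
qed

lemma maximally_mixed_axis_optimal:
  assumes mixed: "ptrace_A \<rho> = (1/2) *\<^sub>R mat 1"
    and min: "\<forall>k. \<bar>corr \<rho> m m\<bar> \<le> \<bar>corr \<rho> k k\<bar>"
  shows "cyclic \<rho> (pauli_vec (axis m 1))"
    and "\<And>U. cyclic \<rho> U \<Longrightarrow> (\<Sum>k\<in>UNIV. (corr \<rho> k k)\<^sup>2 * transverse_weight U k)
      \<le> (\<Sum>k\<in>UNIV. (corr \<rho> k k)\<^sup>2 * (1 - (axis m 1 $ k)\<^sup>2))"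
proof -
  show "cyclic \<rho> (pauli_vec (axis m 1))"
    unfolding cyclic_def mixed
    by (simp add: pauli_vec_unitary matrix_scalar_ac flip: scalar_matrix_assoc)
  fix U
  assume "cyclic \<rho> U"
  then have "unitary_mat U"
    by (simp add: cyclic_def)
  then show "(\<Sum>k\<in>UNIV. (corr \<rho> k k)\<^sup>2 * transverse_weight U k)
      \<le> (\<Sum>k\<in>UNIV. (corr \<rho> k k)\<^sup>2 * (1 - (axis m 1 $ k)\<^sup>2))"
    unfolding transverse_weight_def using min
    by (intro transverse_sum_le_axis) (simp_all add: sum_pauli_coeff_unitary_le abs_le_square_iff)
qed

lemma pauli_vec_optimal:
  assumes "adj \<rho> = \<rho>" "trace_mat \<rho> = 1"
    and n_def: "if ptrace_A \<rho> \<noteq> (1/2) *\<^sub>R mat 1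
                then n = (1 / norm (blochB \<rho>)) *\<^sub>R blochB \<rho>
                else (\<exists>i. (\<forall>k. \<bar>corr \<rho> i i\<bar> \<le> \<bar>corr \<rho> k k\<bar>) \<and> n = axis i 1)"
  shows "norm n = 1" and "cyclic \<rho> (pauli_vec n)"
    and "\<And>U. cyclic \<rho> U \<Longrightarrow> (\<Sum>k\<in>UNIV. (corr \<rho> k k)\<^sup>2 * transverse_weight U k)
      \<le> (\<Sum>k\<in>UNIV. (corr \<rho> k k)\<^sup>2 * (1 - (n$k)\<^sup>2))"
      (is "\<And>U. _ \<Longrightarrow> ?D U \<le> ?B")
proof -
  have "norm n = 1 \<and> cyclic \<rho> (pauli_vec n) \<and> (\<forall>U. cyclic \<rho> U \<longrightarrow> ?D U \<le> ?B)"
  proof (cases "ptrace_A \<rho> = (1/2) *\<^sub>R mat 1")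
    case True
    then show ?thesis
      using n_def maximally_mixed_axis_optimal[OF True] by auto
  next
    case False
    have bloch: "ptrace_A \<rho> = (1/2) *\<^sub>R (mat 1 + pauli_vec (blochB \<rho>))"
      using ptrace_A_bloch assms(1,2) .
    with False have "blochB \<rho> \<noteq> 0"
      by (auto simp: pauli_vec_def)
    then show ?thesis
      using False n_def bloch_direction_optimal[OF bloch]
      by (auto intro!: sum_mono mult_left_mono)
  qed
  then show "norm n = 1" "cyclic \<rho> (pauli_vec n)" "\<And>U. cyclic \<rho> U \<Longrightarrow> ?D U \<le> ?B"
    by blast+
qed

lemma fu_dist_eq_frob_sq: "fu_dist \<rho> U = sqrt (frob_sq (\<rho> - rho_f \<rho> U)) / sqrt 2"
  by (simp add: fu_dist_def frob_def frob_sq_def)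

lemma is_dmax_if_maximal:
  assumes "cyclic \<rho> U\<^sub>0" and "\<And>U. cyclic \<rho> U \<Longrightarrow> fu_dist \<rho> U \<le> fu_dist \<rho> U\<^sub>0"
  shows "is_dmax \<rho> (fu_dist \<rho> U\<^sub>0)"
  using assms unfolding is_dmax_def fu_dists_def by blast

theorem lemma3:
  fixes \<rho> :: qqop and n :: "real^3"
  assumes dens: "density \<rho>"
    and diag: "\<forall>i j. i \<noteq> j \<longrightarrow> corr \<rho> i j = 0"
    and n_def: "if ptrace_A \<rho> \<noteq> (1/2) *\<^sub>R mat 1
                then n = (1 / norm (blochB \<rho>)) *\<^sub>R blochB \<rho>
                else (\<exists>i. (\<forall>k. \<bar>corr \<rho> i i\<bar> \<le> \<bar>corr \<rho> k k\<bar>) \<and> n = axis i 1)"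
  shows "is_dmax \<rho> ((1 / sqrt 2) * sqrt (\<Sum>i\<in>UNIV. (corr \<rho> i i)\<^sup>2 * (1 - (n $ i)\<^sup>2)))"
proof -
  have herm: "adj \<rho> = \<rho>" and tr: "trace_mat \<rho> = 1"
    using dens by (simp_all add: density_def)
  note unit = pauli_vec_optimal(1)[OF herm tr n_def]
    and cyc = pauli_vec_optimal(2)[OF herm tr n_def]
    and bound = pauli_vec_optimal(3)[OF herm tr n_def]
  have dist: "fu_dist \<rho> U
      = sqrt (\<Sum>k\<in>UNIV. (corr \<rho> k k)\<^sup>2 * transverse_weight U k) / sqrt 2"
    if "cyclic \<rho> U" for U
    using frob_sq_diff_rho_f[OF herm diag that] by (simp add: fu_dist_eq_frob_sq)
  have "is_dmax \<rho> (fu_dist \<rho> (pauli_vec n))"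
    using cyc bound by (intro is_dmax_if_maximal) (simp_all add: dist divide_right_mono
        transverse_weight_pauli_vec[OF unit])
  then show ?thesis
    by (simp add: dist[OF cyc] transverse_weight_pauli_vec[OF unit])
qed

end
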